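(* Let $d \ge 1$ be an integer. Neither the Boolean query $\mathrm{LOC}_d$ nor the Boolean query $\mathrm{GLO}_d$ on finite $\{\sim\}$-structures is definable in first-order logic. That is, there is no first-order $\{\sim\}$-sentence $\phi$ such that for every finite $\{\sim\}$-structure $\mathfrak{A}$ we have $\mathfrak{A} \models \phi$ if and only if $\mathfrak{A}$ is a graph that is locally $d$-rigid; and likewise there is no first-order $\{\sim\}$-sentence $\psi$ such that for every finite $\{\sim\}$-structure $\mathfrak{A}$ we have $\mathfrak{A} \models \psi$ if and only if $\mathfrak{A}$ is a graph that is globally $d$-rigid.
   Context: The vocabulary consists of a single binary relation symbol $\sim$. A finite $\{\sim\}$-structure is a pair $(V, E)$ with $V$ a finite set and $E \subseteq V \times V$. It is a graph if it satisfies the first-order sentence $\forall u\,\forall v\,(u \sim v \Rightarrow v \sim u)$; its edges are the pairs $\{x,y\}$ with $x \sim y$. First-order $\{\sim\}$-sentences are built from atomic formulas $v_i = v_j$ and $v_i \sim v_j$ using $\lnot,\land,\lor,\Rightarrow,\Leftrightarrow$ and quantifiers $\exists v_i$, $\forall v_i$, with no free variables. A Boolean query is a map from finite $\{\sim\}$-structures to $\{\mathrm{True},\mathrm{False}\}$; it is first-order definable if there is a first-order sentence $\phi$ with $Q(\mathfrak{A}) = \mathrm{True}$ iff $\mathfrak{A} \models \phi$. The queries are: $\mathrm{LOC}_d(\mathfrak{A}) = \mathrm{True}$ iff $\mathfrak{A}$ is a graph and is locally $d$-rigid; $\mathrm{GLO}_d(\mathfrak{A}) = \mathrm{True}$ iff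 $\mathfrak{A}$ is a graph and is globally $d$-rigid. Rigidity: a $d$-framework is a pair $(G,p)$ with $G=(V,E)$ a graph and $p: V \to \mathbb{R}^d$. Frameworks $(G,p)$ and $(G,q)$ are equivalent if $\|p(u)-p(v)\| = \|q(u)-q(v)\|$ for every edge $uv$, and congruent if this holds for all pairs $u,v \in V$. $(G,p)$ is globally rigid if every equivalent framework is congruent to it, and locally rigid if there is $\varepsilon>0$ such that every equivalent $(G,q)$ with $\|p(v)-q(v)\| \le \varepsilon$ for all $v$ is congruent to $(G,p)$. A graph $G$ is locally (resp. globally) $d$-rigid if $(G,p)$ is locally (resp. globally) rigid for Lebesgue-almost every $p: V \to \mathbb{R}^d$ (for each graph, either almost every $p$ has the property or almost every $p$ fails it). *)

theory Defs
  imports "HOL-Analysis.Analysis" "HOL-Probability.Probability"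
begin

datatype fo =
    FEq nat nat
  | FRel nat nat
  | FNot fo
  | FAnd fo fo
  | FOr fo fo
  | FImp fo fo
  | FIff fo fo
  | FEx nat fo
  | FAll nat fo

fun free_vars :: "fo \<Rightarrow> nat set" where
  "free_vars (FEq i j) = {i, j}"
| "free_vars (FRel i j) = {i, j}"
| "free_vars (FNot a) = free_vars a"
| "free_vars (FAnd a b) = free_vars a \<union> free_vars b"
| "free_vars (FOr a b) = free_vars a \<union> free_vars b"
| "free_vars (FImp a b) = free_vars a \<union> free_vars b"
| "free_vars (FIff a b) = free_vars a \<union> free_vars b"
| "free_vars (FEx i a) = free_vars a - {i}"
| "free_vars (FAll i a) = free_vars a - {i}"

definition sentence :: "fo \<Rightarrow> bool" where
  "sentence \<phi> \<longleftrightarrow> free_vars \<phi> = {}"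

fun sat :: "'a set \<Rightarrow> ('a \<times> 'a) set \<Rightarrow> (nat \<Rightarrow> 'a) \<Rightarrow> fo \<Rightarrow> bool" where
  "sat V E s (FEq i j) = (s i = s j)"
| "sat V E s (FRel i j) = ((s i, s j) \<in> E)"
| "sat V E s (FNot a) = (\<not> sat V E s a)"
| "sat V E s (FAnd a b) = (sat V E s a \<and> sat V E s b)"
| "sat V E s (FOr a b) = (sat V E s a \<or> sat V E s b)"
| "sat V E s (FImp a b) = (sat V E s a \<longrightarrow> sat V E s b)"
| "sat V E s (FIff a b) = (sat V E s a \<longleftrightarrow> sat V E s b)"
| "sat V E s (FEx i a) = (\<exists>x\<in>V. sat V E (s(i := x)) a)"
| "sat V E s (FAll i a) = (\<forall>x\<in>V. sat V E (s(i := x)) a)"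

text \<open>For sentences the assignment is irrelevant.\<close>
definition models :: "'a set \<Rightarrow> ('a \<times> 'a) set \<Rightarrow> fo \<Rightarrow> bool" where
  "models V E \<phi> \<longleftrightarrow> sat V E (\<lambda>_. undefined) \<phi>"

definition is_graph :: "('a \<times> 'a) set \<Rightarrow> bool" where
  "is_graph E \<longleftrightarrow> (\<forall>u v. (u, v) \<in> E \<longrightarrow> (v, u) \<in> E)"

definition equivalent_fw :: "'a set \<Rightarrow> ('a \<times> 'a) set \<Rightarrow> ('a \<Rightarrow> real^'d) \<Rightarrow> ('a \<Rightarrow> real^'d) \<Rightarrow> bool" where
  "equivalent_fw V E p q \<longleftrightarrow>
     (\<forall>u\<in>V. \<forall>v\<in>V. (u, v) \<in> E \<longrightarrow> norm (p u - p v) = norm (q u - q v))"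

definition congruent_fw :: "'a set \<Rightarrow> ('a \<Rightarrow> real^'d) \<Rightarrow> ('a \<Rightarrow> real^'d) \<Rightarrow> bool" where
  "congruent_fw V p q \<longleftrightarrow> (\<forall>u\<in>V. \<forall>v\<in>V. norm (p u - p v) = norm (q u - q v))"

definition globally_rigid_fw :: "'a set \<Rightarrow> ('a \<times> 'a) set \<Rightarrow> ('a \<Rightarrow> real^'d) \<Rightarrow> bool" where
  "globally_rigid_fw V E p \<longleftrightarrow> (\<forall>q. equivalent_fw V E p q \<longrightarrow> congruent_fw V p q)"

definition locally_rigid_fw :: "'a set \<Rightarrow> ('a \<times> 'a) set \<Rightarrow> ('a \<Rightarrow> real^'d) \<Rightarrow> bool" where
  "locally_rigid_fw V E p \<longleftrightarrow>
     (\<exists>\<epsilon>>0. \<forall>q. (\<forall>v\<in>V. norm (p v - q v) \<le> \<epsilon>) \<and> equivalent_fw V E p q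
                 \<longrightarrow> congruent_fw V p q)"

definition config_measure :: "'a set \<Rightarrow> 'd itself \<Rightarrow> ('a \<Rightarrow> real^'d::finite) measure" where
  "config_measure V _ = PiM V (\<lambda>_. lborel)"

definition locally_d_rigid :: "'d::finite itself \<Rightarrow> 'a set \<Rightarrow> ('a \<times> 'a) set \<Rightarrow> bool" where
  "locally_d_rigid D V E \<longleftrightarrow>
     (AE p in config_measure V D. locally_rigid_fw V E (p :: 'a \<Rightarrow> real^'d))"

definition globally_d_rigid :: "'d::finite itself \<Rightarrow> 'a set \<Rightarrow> ('a \<times> 'a) set \<Rightarrow> bool" where
  "globally_d_rigid D V E \<longleftrightarrow>
     (AE p in config_measure V D. globally_rigid_fw V E (p :: 'a \<Rightarrow> real^'d))"

definition LOC :: "'d::finite itself \<Rightarrow> nat set \<Rightarrow> (nat \<times> nat) set \<Rightarrow> bool" where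
  "LOC D V E \<longleftrightarrow> is_graph E \<and> locally_d_rigid D V E"

definition GLO :: "'d::finite itself \<Rightarrow> nat set \<Rightarrow> (nat \<times> nat) set \<Rightarrow> bool" where
  "GLO D V E \<longleftrightarrow> is_graph E \<and> globally_d_rigid D V E"

definition fo_definable :: "(nat set \<Rightarrow> (nat \<times> nat) set \<Rightarrow> bool) \<Rightarrow> bool" where
  "fo_definable Q \<longleftrightarrow> (\<exists>\<phi>. sentence \<phi> \<and>
     (\<forall>V E. finite V \<and> E \<subseteq> V \<times> V \<longrightarrow> (models V E \<phi> \<longleftrightarrow> Q V E)))"

end

(*
  The queries are separated by the cycle power C_N^(d+1), the N-cycle with each vertex joined to
  the d + 1 nearest vertices on either side, and by the disjoint union of two copies of it.

  For almost every placement in R^d, any d + 1 consecutive vertices of C_N^(d+1) are affinely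
  independent. An equivalent placement then agrees with the given one up to an isometry on the
  first d + 1 vertices, and by trilateration on all of them: C_N^(d+1) is generically globally,
  hence locally, rigid. The disjoint union is never locally rigid, since translating one copy by
  a small vector changes a distance between the two copies.

  Both graphs come from a free action of Z/N (x is adjacent to x + delta for 1 <= |delta| <= d + 1).
  When N is large compared to the quantifier rank of a sentence, Duplicator wins the
  Ehrenfeucht-Fraisse game by keeping the pebbled vertices at the same offsets, up to size
  (d + 1) 2^j while j rounds remain, in both graphs. So no sentence tells them apart.
*)
theory Submission
  imports Defs
begin

section \<open>Ehrenfeucht-Fraisse games on graphs of cyclic actions\<close>

fun quantifier_rank :: "fo \<Rightarrow> nat" where
  "quantifier_rank (FEq i j) = 0"
| "quantifier_rank (FRel i j) = 0"
| "quantifier_rank (FNot a) = quantifier_rank a"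
| "quantifier_rank (FAnd a b) = max (quantifier_rank a) (quantifier_rank b)"
| "quantifier_rank (FOr a b) = max (quantifier_rank a) (quantifier_rank b)"
| "quantifier_rank (FImp a b) = max (quantifier_rank a) (quantifier_rank b)"
| "quantifier_rank (FIff a b) = max (quantifier_rank a) (quantifier_rank b)"
| "quantifier_rank (FEx i a) = Suc (quantifier_rank a)"
| "quantifier_rank (FAll i a) = Suc (quantifier_rank a)"

definition cyclic_action :: "'a set \<Rightarrow> ('a \<Rightarrow> int \<Rightarrow> 'a) \<Rightarrow> nat \<Rightarrow> bool" where
  "cyclic_action V sh N \<longleftrightarrow> (\<forall>x\<in>V. \<forall>a. sh x a \<in> V) \<and> (\<forall>x\<in>V. sh x 0 = x) \<and>
     (\<forall>x\<in>V. \<forall>a b. sh (sh x a) b = sh x (a + b)) \<and> (\<forall>x\<in>V. \<forall>a. sh x a = x \<longleftrightarrow> int N dvd a)"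

lemma cyclic_action_closed: "cyclic_action V sh N \<Longrightarrow> x \<in> V \<Longrightarrow> sh x a \<in> V"
  unfolding cyclic_action_def by blast

lemma cyclic_action_zero: "cyclic_action V sh N \<Longrightarrow> x \<in> V \<Longrightarrow> sh x 0 = x"
  unfolding cyclic_action_def by blast

lemma cyclic_action_shift_eq_iff:
  assumes "cyclic_action V sh N" "z \<in> V" "w \<in> V"
  shows "sh z a = sh w b \<longleftrightarrow> z = sh w (b - a)"
proof
  assume "sh z a = sh w b"
  then have "sh (sh z a) (- a) = sh (sh w b) (- a)" by simp
  then show "z = sh w (b - a)" using assms unfolding cyclic_action_def by simp
qed (use assms in \<open>simp add: cyclic_action_def\<close>)

lemma cyclic_action_shift_inverse:
  assumes "cyclic_action V sh N" "x \<in> V" "y \<in> V"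
  shows "y = sh x a \<longleftrightarrow> x = sh y (- a)"
proof
  assume "y = sh x a"
  then show "x = sh y (- a)" using assms by (simp add: cyclic_action_def)
next
  assume "x = sh y (- a)"
  then show "y = sh x a" using assms by (simp add: cyclic_action_def)
qed

definition shift_graph :: "'a set \<Rightarrow> ('a \<Rightarrow> int \<Rightarrow> 'a) \<Rightarrow> nat \<Rightarrow> ('a \<times> 'a) set" where
  "shift_graph V sh m = {(x, y). x \<in> V \<and> y \<in> V \<and> (\<exists>\<delta>. 1 \<le> \<bar>\<delta>\<bar> \<and> \<bar>\<delta>\<bar> \<le> int m \<and> y = sh x \<delta>)}"

lemma shift_graph_subset: "shift_graph V sh m \<subseteq> V \<times> V"
  unfolding shift_graph_def by auto

lemma is_graph_shift_graph:
  assumes "cyclic_action V sh N"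
  shows "is_graph (shift_graph V sh m)"
  unfolding is_graph_def
proof (intro allI impI)
  fix u v assume "(u, v) \<in> shift_graph V sh m"
  then obtain \<delta> where uv: "u \<in> V" "v \<in> V" "1 \<le> \<bar>\<delta>\<bar>" "\<bar>\<delta>\<bar> \<le> int m" "v = sh u \<delta>"
    unfolding shift_graph_def by blast
  then have "u = sh v (- \<delta>)" using cyclic_action_shift_inverse[OF assms uv(1,2), of \<delta>] by simp
  then show "(v, u) \<in> shift_graph V sh m"
    using uv unfolding shift_graph_def by (auto intro!: exI[of _ "- \<delta>"])
qed

(* Duplicator's invariant: the variables in X are placed by s and s' with the same offsets of
   size at most t. Each round of the game halves t. *)

definition shift_equiv :: "'a set \<Rightarrow> ('a \<Rightarrow> int \<Rightarrow> 'a) \<Rightarrow> 'b set \<Rightarrow> ('b \<Rightarrow> int \<Rightarrow> 'b)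
    \<Rightarrow> nat \<Rightarrow> nat set \<Rightarrow> (nat \<Rightarrow> 'a) \<Rightarrow> (nat \<Rightarrow> 'b) \<Rightarrow> bool" where
  "shift_equiv VA shA VB shB t X s s' \<longleftrightarrow> (\<forall>i\<in>X. s i \<in> VA \<and> s' i \<in> VB) \<and>
     (\<forall>i\<in>X. \<forall>j\<in>X. \<forall>\<delta>. \<bar>\<delta>\<bar> \<le> int t \<longrightarrow> (s j = shA (s i) \<delta> \<longleftrightarrow> s' j = shB (s' i) \<delta>))"

lemma shift_equiv_swap: "shift_equiv VA shA VB shB t X s s' \<longleftrightarrow> shift_equiv VB shB VA shA t X s' s"
  unfolding shift_equiv_def by blast

lemma shift_equiv_mono:
  "shift_equiv VA shA VB shB t X s s' \<Longrightarrow> t' \<le> t \<Longrightarrow> Y \<subseteq> X \<Longrightarrow> shift_equiv VA shA VB shB t' Y s s'"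
  unfolding shift_equiv_def by (meson order_trans of_nat_le_iff subsetD)

lemma exists_far_point:
  fixes sh :: "'b \<Rightarrow> int \<Rightarrow> 'b"
  assumes "finite X" "finite V" "card X * (2*t+1) < card V"
  shows "\<exists>y\<in>V. \<forall>j\<in>X. \<forall>\<delta>. \<bar>\<delta>\<bar> \<le> int t \<longrightarrow> y \<noteq> sh (s j) \<delta>"
proof -
  let ?F = "(\<lambda>(j, \<delta>). sh (s j) \<delta>) ` (X \<times> {- int t..int t})"
  have "card ?F \<le> card (X \<times> {- int t..int t})"
    using assms(1) by (intro card_image_le) auto
  also have "\<dots> = card X * (2*t+1)"
    by (auto simp: card_cartesian_product nat_add_distrib nat_mult_distrib)
  finally have "\<not> V \<subseteq> ?F"
    using assms by (meson card_mono finite_imageI finite_SigmaI finite_atLeastAtMost_int leD le_less_trans)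
  then show ?thesis by force
qed

lemma shift_equiv_insert:
  assumes A: "cyclic_action VA shA N" and B: "cyclic_action VB shB N"
    and R: "shift_equiv VA shA VB shB t X s s'"
    and x: "x \<in> VA" and y: "y \<in> VB"
    and new: "\<And>j \<delta>. j \<in> X \<Longrightarrow> \<bar>\<delta>\<bar> \<le> int t \<Longrightarrow> x = shA (s j) \<delta> \<longleftrightarrow> y = shB (s' j) \<delta>"
  shows "shift_equiv VA shA VB shB t (insert i X) (s(i := x)) (s'(i := y))"
  unfolding shift_equiv_def
proof (intro conjI ballI allI impI)
  fix j assume "j \<in> insert i X"
  then show "(s(i := x)) j \<in> VA" using R x unfolding shift_equiv_def by auto
next
  fix j assume "j \<in> insert i X"
  then show "(s'(i := y)) j \<in> VB" using R y unfolding shift_equiv_def by auto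
next
  fix u v \<delta> assume u: "u \<in> insert i X" and v: "v \<in> insert i X" and \<delta>: "\<bar>\<delta>\<bar> \<le> int t"
  have X: "\<forall>j\<in>X. s j \<in> VA \<and> s' j \<in> VB" using R unfolding shift_equiv_def by blast
  have "shA x \<delta> = x \<longleftrightarrow> int N dvd \<delta>" "shB y \<delta> = y \<longleftrightarrow> int N dvd \<delta>"
    using A B x y unfolding cyclic_action_def by auto
  then have self: "x = shA x \<delta> \<longleftrightarrow> y = shB y \<delta>" by auto
  have old: "s j = shA x \<delta> \<longleftrightarrow> s' j = shB y \<delta>" if "j \<in> X" for j
  proof -
    have "s j = shA x \<delta> \<longleftrightarrow> x = shA (s j) (- \<delta>)"
      using cyclic_action_shift_inverse[OF A x] X that by blast
    also have "\<dots> \<longleftrightarrow> y = shB (s' j) (- \<delta>)" using new[OF that, of "- \<delta>"] \<delta> by simp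
    also have "\<dots> \<longleftrightarrow> s' j = shB y \<delta>"
      using cyclic_action_shift_inverse[OF B y] X that by simp
    finally show ?thesis .
  qed
  consider "u = i" "v = i" | "u = i" "v \<in> X" "v \<noteq> i" | "u \<in> X" "u \<noteq> i" "v = i"
    | "u \<in> X" "u \<noteq> i" "v \<in> X" "v \<noteq> i"
    using u v by blast
  then show "(s(i := x)) v = shA ((s(i := x)) u) \<delta> \<longleftrightarrow> (s'(i := y)) v = shB ((s'(i := y)) u) \<delta>"
  proof cases
    case 1
    then show ?thesis using self by simp
  next
    case 2
    then show ?thesis using old[of v] by simp
  next
    case 3
    then show ?thesis using new[of u \<delta>] \<delta> by simp
  next
    case 4
    then show ?thesis using R \<delta> unfolding shift_equiv_def by simp
  qed
qed

(* If x lies within offset t of an old point, copy that offset on the other side; otherwise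
   answer with a point far from all old points, which exists because VB is large. *)

lemma shift_equiv_forth:
  assumes A: "cyclic_action VA shA N" and B: "cyclic_action VB shB N"
    and R: "shift_equiv VA shA VB shB (2*t) X s s'"
    and fin: "finite X" "finite VB" and big: "card X * (2*t+1) < card VB" and x: "x \<in> VA"
  shows "\<exists>y\<in>VB. shift_equiv VA shA VB shB t (insert i X) (s(i := x)) (s'(i := y))"
proof -
  define X' where "X' = X - {i}"
  have R': "shift_equiv VA shA VB shB t X' s s'"
    by (rule shift_equiv_mono[OF R]) (auto simp: X'_def)
  have X': "\<forall>j\<in>X'. s j \<in> VA \<and> s' j \<in> VB"
    using R' unfolding shift_equiv_def by blast
  have ins: "insert i X' = insert i X" unfolding X'_def by blast
  show ?thesis
  proof (cases "\<exists>j\<in>X'. \<exists>\<delta>. \<bar>\<delta>\<bar> \<le> int t \<and> x = shA (s j) \<delta>")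
    case True
    then obtain j \<delta> where j: "j \<in> X'" "\<bar>\<delta>\<bar> \<le> int t" "x = shA (s j) \<delta>" by blast
    define y where "y = shB (s' j) \<delta>"
    have y: "y \<in> VB" using X' j(1) unfolding y_def by (simp add: cyclic_action_closed[OF B])
    have "x = shA (s k) \<epsilon> \<longleftrightarrow> y = shB (s' k) \<epsilon>" if k: "k \<in> X'" "\<bar>\<epsilon>\<bar> \<le> int t" for k \<epsilon>
    proof -
      have mem: "s j \<in> VA" "s k \<in> VA" "s' j \<in> VB" "s' k \<in> VB" using X' j(1) k(1) by auto
      have "\<bar>\<epsilon> - \<delta>\<bar> \<le> 2 * int t" using abs_triangle_ineq4[of \<epsilon> \<delta>] j(2) k(2) by linarith
      then have R2: "s j = shA (s k) (\<epsilon> - \<delta>) \<longleftrightarrow> s' j = shB (s' k) (\<epsilon> - \<delta>)"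
        using R j(1) k(1) unfolding shift_equiv_def X'_def by simp
      have "x = shA (s k) \<epsilon> \<longleftrightarrow> s j = shA (s k) (\<epsilon> - \<delta>)"
        unfolding j(3) by (rule cyclic_action_shift_eq_iff[OF A mem(1,2)])
      also have "\<dots> \<longleftrightarrow> s' j = shB (s' k) (\<epsilon> - \<delta>)" by (rule R2)
      also have "\<dots> \<longleftrightarrow> y = shB (s' k) \<epsilon>"
        unfolding y_def by (rule cyclic_action_shift_eq_iff[OF B mem(3,4), symmetric])
      finally show ?thesis .
    qed
    then have "shift_equiv VA shA VB shB t (insert i X') (s(i := x)) (s'(i := y))"
      by (rule shift_equiv_insert[OF A B R' x y])
    then show ?thesis unfolding ins using y by blast
  next
    case False
    have "card X' * (2*t+1) < card VB"
      using le_less_trans[OF mult_le_mono1[OF card_Diff1_le] big] unfolding X'_def .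
    then obtain y where y: "y \<in> VB" and far: "\<forall>j\<in>X'. \<forall>\<delta>. \<bar>\<delta>\<bar> \<le> int t \<longrightarrow> y \<noteq> shB (s' j) \<delta>"
      using exists_far_point[of X' VB t shB s'] fin unfolding X'_def by blast
    have "x = shA (s j) \<delta> \<longleftrightarrow> y = shB (s' j) \<delta>" if "j \<in> X'" "\<bar>\<delta>\<bar> \<le> int t" for j \<delta>
      using False far that by blast
    then have "shift_equiv VA shA VB shB t (insert i X') (s(i := x)) (s'(i := y))"
      by (rule shift_equiv_insert[OF A B R' x y])
    then show ?thesis unfolding ins using y by blast
  qed
qed

lemma shift_equiv_back_and_forth:
  assumes A: "cyclic_action VA shA N" and B: "cyclic_action VB shB N"
    and fin: "finite VA" "finite VB"
    and big: "K * (2 * (m * 2 ^ K) + 1) < card VA" "K * (2 * (m * 2 ^ K) + 1) < card VB"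
    and X: "finite X" "card X + Suc k \<le> K" and R: "shift_equiv VA shA VB shB (m * 2 ^ Suc k) X s s'"
  shows "\<forall>x\<in>VA. \<exists>y\<in>VB. shift_equiv VA shA VB shB (m * 2 ^ k) (insert i X) (s(i := x)) (s'(i := y))"
    and "\<forall>y\<in>VB. \<exists>x\<in>VA. shift_equiv VA shA VB shB (m * 2 ^ k) (insert i X) (s(i := x)) (s'(i := y))"
proof -
  have "(2::nat) ^ k \<le> 2 ^ K" using X by (intro power_increasing) auto
  then have size: "card X * (2 * (m * 2 ^ k) + 1) \<le> K * (2 * (m * 2 ^ K) + 1)"
    using X by (intro mult_le_mono add_le_mono1) auto
  have R2: "shift_equiv VA shA VB shB (2 * (m * 2 ^ k)) X s s'" using R by (simp add: ac_simps)
  show "\<forall>x\<in>VA. \<exists>y\<in>VB. shift_equiv VA shA VB shB (m * 2 ^ k) (insert i X) (s(i := x)) (s'(i := y))"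
    using shift_equiv_forth[OF A B R2 X(1) fin(2) le_less_trans[OF size big(2)]] by blast
  show "\<forall>y\<in>VB. \<exists>x\<in>VA. shift_equiv VA shA VB shB (m * 2 ^ k) (insert i X) (s(i := x)) (s'(i := y))"
    using shift_equiv_forth[OF B A R2[unfolded shift_equiv_swap[of VA]] X(1) fin(1)
        le_less_trans[OF size big(1)]]
    unfolding shift_equiv_swap[of VA] by blast
qed

lemma sat_shift_graph_iff:
  assumes A: "cyclic_action VA shA N" and B: "cyclic_action VB shB N"
    and fin: "finite VA" "finite VB"
    and big: "K * (2 * (m * 2 ^ K) + 1) < card VA" "K * (2 * (m * 2 ^ K) + 1) < card VB"
  shows "finite X \<Longrightarrow> free_vars \<phi> \<subseteq> X \<Longrightarrow> quantifier_rank \<phi> \<le> k \<Longrightarrow> card X + k \<le> K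
    \<Longrightarrow> shift_equiv VA shA VB shB (m * 2 ^ k) X s s'
    \<Longrightarrow> sat VA (shift_graph VA shA m) s \<phi> \<longleftrightarrow> sat VB (shift_graph VB shB m) s' \<phi>"
proof (induction \<phi> arbitrary: X k s s')
  case (FEq i j)
  then have "s i \<in> VA" "s' i \<in> VB" and iff: "s j = shA (s i) 0 \<longleftrightarrow> s' j = shB (s' i) 0"
    unfolding shift_equiv_def by auto
  then have "shA (s i) 0 = s i" "shB (s' i) 0 = s' i"
    using cyclic_action_zero[OF A] cyclic_action_zero[OF B] by blast+
  then have "s j = s i \<longleftrightarrow> s' j = s' i" using iff by simp
  then show ?case by auto
next
  case (FRel i j)
  have ij: "i \<in> X" "j \<in> X" using FRel.prems(2) by auto
  have "m * 1 \<le> m * 2 ^ k" by (intro mult_le_mono2) simp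
  then have "\<bar>\<delta>\<bar> \<le> int (m * 2 ^ k)" if "\<bar>\<delta>\<bar> \<le> int m" for \<delta>
    using that by linarith
  then have "s j = shA (s i) \<delta> \<longleftrightarrow> s' j = shB (s' i) \<delta>" if "\<bar>\<delta>\<bar> \<le> int m" for \<delta>
    using FRel.prems(5) ij that unfolding shift_equiv_def by blast
  then have "(\<exists>\<delta>. 1 \<le> \<bar>\<delta>\<bar> \<and> \<bar>\<delta>\<bar> \<le> int m \<and> s j = shA (s i) \<delta>)
      \<longleftrightarrow> (\<exists>\<delta>. 1 \<le> \<bar>\<delta>\<bar> \<and> \<bar>\<delta>\<bar> \<le> int m \<and> s' j = shB (s' i) \<delta>)"
    by blast
  moreover have "s i \<in> VA" "s j \<in> VA" "s' i \<in> VB" "s' j \<in> VB"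
    using FRel.prems(5) ij unfolding shift_equiv_def by auto
  ultimately show ?case unfolding shift_graph_def by simp
next
  case (FNot a)
  show ?case using FNot.prems FNot.IH[of X k s s'] by simp
next
  case (FAnd a b)
  show ?case using FAnd.prems FAnd.IH[of X k s s'] by simp
next
  case (FOr a b)
  show ?case using FOr.prems FOr.IH[of X k s s'] by simp
next
  case (FImp a b)
  show ?case using FImp.prems FImp.IH[of X k s s'] by simp
next
  case (FIff a b)
  show ?case using FIff.prems FIff.IH[of X k s s'] by simp
next
  case (FEx i a)
  then obtain k' where k: "k = Suc k'" "quantifier_rank a \<le> k'" by (cases k) auto
  have X': "finite (insert i X)" "free_vars a \<subseteq> insert i X" "card (insert i X) + k' \<le> K"
    using FEx.prems k by (auto simp: card_insert_if)
  have "sat VA (shift_graph VA shA m) (s(i := x)) a \<longleftrightarrow> sat VB (shift_graph VB shB m) (s'(i := y)) a"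
    if "shift_equiv VA shA VB shB (m * 2 ^ k') (insert i X) (s(i := x)) (s'(i := y))" for x y
    using FEx.IH[OF X'(1,2) k(2) X'(3) that] .
  moreover have "card X + Suc k' \<le> K" "shift_equiv VA shA VB shB (m * 2 ^ Suc k') X s s'"
    using FEx.prems k by auto
  note shift_equiv_back_and_forth[OF A B fin big FEx.prems(1) this, where i = i]
  ultimately show ?case by (simp only: sat.simps) blast
next
  case (FAll i a)
  then obtain k' where k: "k = Suc k'" "quantifier_rank a \<le> k'" by (cases k) auto
  have X': "finite (insert i X)" "free_vars a \<subseteq> insert i X" "card (insert i X) + k' \<le> K"
    using FAll.prems k by (auto simp: card_insert_if)
  have "sat VA (shift_graph VA shA m) (s(i := x)) a \<longleftrightarrow> sat VB (shift_graph VB shB m) (s'(i := y)) a"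
    if "shift_equiv VA shA VB shB (m * 2 ^ k') (insert i X) (s(i := x)) (s'(i := y))" for x y
    using FAll.IH[OF X'(1,2) k(2) X'(3) that] .
  moreover have "card X + Suc k' \<le> K" "shift_equiv VA shA VB shB (m * 2 ^ Suc k') X s s'"
    using FAll.prems k by auto
  note shift_equiv_back_and_forth[OF A B fin big FAll.prems(1) this, where i = i]
  ultimately show ?case by (simp only: sat.simps) blast
qed

section \<open>One cycle power versus two\<close>

definition cycle_shift :: "nat \<Rightarrow> nat \<Rightarrow> int \<Rightarrow> nat" where
  "cycle_shift N x \<delta> = nat ((int x + \<delta>) mod int N)"

definition twin_cycle_shift :: "nat \<Rightarrow> nat \<Rightarrow> int \<Rightarrow> nat" where
  "twin_cycle_shift N x \<delta> = x div N * N + cycle_shift N (x mod N) \<delta>"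

definition cycle_power :: "nat \<Rightarrow> nat \<Rightarrow> (nat \<times> nat) set" where
  "cycle_power N m = shift_graph {0..<N} (cycle_shift N) m"

definition twin_cycle_power :: "nat \<Rightarrow> nat \<Rightarrow> (nat \<times> nat) set" where
  "twin_cycle_power N m = shift_graph {0..<2 * N} (twin_cycle_shift N) m"

lemma cycle_shift_less: "0 < N \<Longrightarrow> cycle_shift N x a < N"
  unfolding cycle_shift_def by (simp add: nat_less_iff)

lemma cycle_shift_add: "0 < N \<Longrightarrow> cycle_shift N (cycle_shift N x a) b = cycle_shift N x (a + b)"
  unfolding cycle_shift_def by (simp add: mod_add_left_eq add.assoc)

lemma cycle_shift_fixed_iff: "x < N \<Longrightarrow> cycle_shift N x a = x \<longleftrightarrow> int N dvd a"
proof -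
  assume x: "x < N"
  have "int (cycle_shift N x a) = (int x + a) mod int N"
    using x unfolding cycle_shift_def by simp
  then have "cycle_shift N x a = x \<longleftrightarrow> (int x + a) mod int N = int x"
    by (metis of_nat_eq_iff)
  also have "\<dots> \<longleftrightarrow> (int x + a) mod int N = int x mod int N" using x by simp
  also have "\<dots> \<longleftrightarrow> int N dvd a" by (simp add: mod_eq_dvd_iff)
  finally show ?thesis .
qed

lemma cyclic_action_cycle_shift: "0 < N \<Longrightarrow> cyclic_action {0..<N} (cycle_shift N) N"
  unfolding cyclic_action_def
  using cycle_shift_less cycle_shift_add cycle_shift_fixed_iff[where a = 0] cycle_shift_fixed_iff
  by auto

lemma twin_cycle_shift_div: "0 < N \<Longrightarrow> twin_cycle_shift N x a div N = x div N"
  unfolding twin_cycle_shift_def using cycle_shift_less by simp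

lemma twin_cycle_shift_mod: "0 < N \<Longrightarrow> twin_cycle_shift N x a mod N = cycle_shift N (x mod N) a"
  unfolding twin_cycle_shift_def using cycle_shift_less by simp

lemma cyclic_action_twin_cycle_shift: "0 < N \<Longrightarrow> cyclic_action {0..<2 * N} (twin_cycle_shift N) N"
proof -
  assume N: "0 < N"
  have fixed: "twin_cycle_shift N x a = x \<longleftrightarrow> int N dvd a" for x a
  proof -
    have "twin_cycle_shift N x a = x \<longleftrightarrow> cycle_shift N (x mod N) a = x mod N"
      unfolding twin_cycle_shift_def by (metis add_left_cancel mod_div_mult_eq add.commute)
    also have "\<dots> \<longleftrightarrow> int N dvd a" using cycle_shift_fixed_iff N by simp
    finally show ?thesis .
  qed
  have "twin_cycle_shift N x a < 2 * N" if "x < 2 * N" for x a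
  proof -
    have "x div N < 2" using that by (simp add: less_mult_imp_div_less)
    then have "x div N * N \<le> 1 * N" by (intro mult_le_mono1) simp
    then show ?thesis
      unfolding twin_cycle_shift_def using cycle_shift_less[OF N, of "x mod N" a] by linarith
  qed
  moreover have "twin_cycle_shift N (twin_cycle_shift N x a) b = twin_cycle_shift N x (a + b)" for x a b
    unfolding twin_cycle_shift_def[of N "twin_cycle_shift N x a"]
    by (simp add: twin_cycle_shift_div[OF N] twin_cycle_shift_mod[OF N] cycle_shift_add[OF N]
        twin_cycle_shift_def[of N x "a + b"])
  ultimately show ?thesis
    unfolding cyclic_action_def using fixed[where a = 0] fixed by auto
qed

lemma models_cycle_power_iff_twin_cycle_power:
  assumes "sentence \<phi>" "quantifier_rank \<phi> * (2 * (m * 2 ^ quantifier_rank \<phi>) + 1) < N"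
  shows "models {0..<N} (cycle_power N m) \<phi> \<longleftrightarrow> models {0..<2 * N} (twin_cycle_power N m) \<phi>"
proof -
  have N: "0 < N" using assms(2) by linarith
  show ?thesis
    unfolding models_def cycle_power_def twin_cycle_power_def
    by (rule sat_shift_graph_iff[OF cyclic_action_cycle_shift[OF N]
          cyclic_action_twin_cycle_shift[OF N],
          where K = "quantifier_rank \<phi>" and X = "{}" and k = "quantifier_rank \<phi>"])
      (use assms in \<open>auto simp: sentence_def shift_equiv_def\<close>)
qed

lemma not_fo_definable_if_separates_cycle_powers:
  assumes "\<And>N. n < N \<Longrightarrow> Q {0..<N} (cycle_power N m)"
    and "\<And>N. 0 < N \<Longrightarrow> \<not> Q {0..<2 * N} (twin_cycle_power N m)"
  shows "\<not> fo_definable Q"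
proof
  assume "fo_definable Q"
  then obtain \<phi> where \<phi>: "sentence \<phi>"
    and Q: "\<forall>V E. finite V \<and> E \<subseteq> V \<times> V \<longrightarrow> (models V E \<phi> \<longleftrightarrow> Q V E)"
    unfolding fo_definable_def by (elim exE conjE)
  define N where "N = quantifier_rank \<phi> * (2 * (m * 2 ^ quantifier_rank \<phi>) + 1) + n + 1"
  have N: "n < N" "0 < N" "quantifier_rank \<phi> * (2 * (m * 2 ^ quantifier_rank \<phi>) + 1) < N"
    unfolding N_def by simp_all
  have "cycle_power N m \<subseteq> {0..<N} \<times> {0..<N}" "twin_cycle_power N m \<subseteq> {0..<2 * N} \<times> {0..<2 * N}"
    unfolding cycle_power_def twin_cycle_power_def by (rule shift_graph_subset)+
  then have "models {0..<N} (cycle_power N m) \<phi>" "\<not> models {0..<2 * N} (twin_cycle_power N m) \<phi>"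
    using Q assms N(1,2) by simp_all
  moreover have "models {0..<N} (cycle_power N m) \<phi> \<longleftrightarrow> models {0..<2 * N} (twin_cycle_power N m) \<phi>"
    using \<phi> N(3) by (rule models_cycle_power_iff_twin_cycle_power)
  ultimately show False by blast
qed

section \<open>Independent families and Gram determinants\<close>

definition independent_on :: "'i set \<Rightarrow> ('i::finite \<Rightarrow> 'v::real_vector) \<Rightarrow> bool" where
  "independent_on S a \<longleftrightarrow>
     (\<forall>k. (\<forall>r. r \<notin> S \<longrightarrow> k r = 0) \<and> (\<Sum>r\<in>UNIV. k r *\<^sub>R a r) = 0 \<longrightarrow> (\<forall>r. k r = 0))"

lemma independent_onD:
  "independent_on S a \<Longrightarrow> \<forall>r. r \<notin> S \<longrightarrow> k r = 0 \<Longrightarrow> (\<Sum>r\<in>UNIV. k r *\<^sub>R a r) = 0 \<Longrightarrow> k r = 0"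
  unfolding independent_on_def by blast

(* Padding by the identity keeps the matrix square, so that its determinant detects
   independence of the subfamily indexed by S. *)

definition gram_on :: "'i set \<Rightarrow> ('i::finite \<Rightarrow> 'v::real_inner) \<Rightarrow> real^'i^'i" where
  "gram_on S a = (\<chi> r s. if r \<in> S \<and> s \<in> S then a r \<bullet> a s else if r = s then 1 else 0)"

lemma det_nonzero_iff_ker_trivial:
  fixes A :: "'a::field^'n^'n"
  shows "det A \<noteq> 0 \<longleftrightarrow> (\<forall>x. A *v x = 0 \<longrightarrow> x = 0)"
  by (simp add: invertible_det_nz[symmetric] invertible_left_inverse matrix_left_invertible_ker)

lemma gram_on_mult_outside: "r \<notin> S \<Longrightarrow> (gram_on S a *v c) $ r = c $ r"
  unfolding gram_on_def matrix_vector_mult_def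
  by (simp add: if_distrib[of "\<lambda>x. x * _"] cong: if_cong)

lemma gram_on_mult_inside:
  assumes "r \<in> S" "\<forall>s. s \<notin> S \<longrightarrow> c $ s = 0"
  shows "(gram_on S a *v c) $ r = a r \<bullet> (\<Sum>s\<in>UNIV. c $ s *\<^sub>R a s)"
proof -
  have "(gram_on S a *v c) $ r = (\<Sum>s\<in>UNIV. (a r \<bullet> a s) * c $ s)"
    unfolding gram_on_def matrix_vector_mult_def using assms by (auto intro!: sum.cong)
  also have "\<dots> = a r \<bullet> (\<Sum>s\<in>UNIV. c $ s *\<^sub>R a s)"
    by (simp add: inner_sum_right mult.commute)
  finally show ?thesis .
qed

lemma independent_on_iff_det_gram: "independent_on S a \<longleftrightarrow> det (gram_on S a) \<noteq> 0"
proof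
  assume ind: "independent_on S a"
  show "det (gram_on S a) \<noteq> 0" unfolding det_nonzero_iff_ker_trivial
  proof (intro allI impI)
    fix c assume gc: "gram_on S a *v c = 0"
    have out: "\<forall>s. s \<notin> S \<longrightarrow> c $ s = 0"
      using gram_on_mult_outside[of _ S a c] unfolding gc by simp
    define v where "v = (\<Sum>s\<in>UNIV. c $ s *\<^sub>R a s)"
    have zero: "c $ r * (a r \<bullet> v) = 0" for r
    proof (cases "r \<in> S")
      case True
      then have "a r \<bullet> v = (gram_on S a *v c) $ r"
        unfolding v_def by (rule gram_on_mult_inside[OF _ out, symmetric])
      then show ?thesis using gc by simp
    next
      case False
      then show ?thesis using out by simp
    qed
    have "v \<bullet> v = (\<Sum>s\<in>UNIV. c $ s * (a s \<bullet> v))"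
      by (subst (1) v_def) (simp add: inner_sum_left)
    also have "\<dots> = 0" by (rule sum.neutral) (use zero in blast)
    finally have "v = 0" by simp
    then have "c $ r = 0" for r
      unfolding v_def by (rule independent_onD[OF ind out])
    then show "c = 0" by (simp add: vec_eq_iff)
  qed
next
  assume d: "det (gram_on S a) \<noteq> 0"
  show "independent_on S a" unfolding independent_on_def
  proof (rule allI, rule impI)
    fix k assume k: "(\<forall>r. r \<notin> S \<longrightarrow> k r = 0) \<and> (\<Sum>r\<in>UNIV. k r *\<^sub>R a r) = 0"
    have out: "\<forall>s. s \<notin> S \<longrightarrow> (\<chi> r. k r) $ s = 0" using k by simp
    have "(gram_on S a *v (\<chi> r. k r)) $ r = 0" for r
      using gram_on_mult_inside[OF _ out, of r a] gram_on_mult_outside[of r S a] out k by (cases "r \<in> S") auto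
    then have "gram_on S a *v (\<chi> r. k r) = 0" by (simp add: vec_eq_iff)
    then have "(\<chi> r. k r) = 0" using d unfolding det_nonzero_iff_ker_trivial by blast
    then show "\<forall>r. k r = 0" by (simp add: vec_eq_iff)
  qed
qed

lemma transpose_rows_mult: "transpose (\<chi> r. a r) *v k = (\<Sum>r\<in>UNIV. (k $ r) *\<^sub>R a r)"
  by (simp add: vec_eq_iff matrix_vector_mult_def transpose_def sum_component mult.commute)

lemma independent_rows_iff_det:
  fixes a :: "'n::finite \<Rightarrow> real^'n"
  shows "independent_on UNIV a \<longleftrightarrow> det (\<chi> r. a r) \<noteq> 0"
proof -
  have "independent_on UNIV a \<longleftrightarrow> (\<forall>x. transpose (\<chi> r. a r) *v x = 0 \<longrightarrow> x = 0)"
    unfolding transpose_rows_mult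
  proof (intro iffI allI impI)
    fix x :: "real^'n" assume ind: "independent_on UNIV a" and sum: "(\<Sum>r\<in>UNIV. x $ r *\<^sub>R a r) = 0"
    have "x $ r = 0" for r by (rule independent_onD[OF ind _ sum]) simp
    then show "x = 0" by (simp add: vec_eq_iff)
  next
    assume ker: "\<forall>x. (\<Sum>r\<in>UNIV. x $ r *\<^sub>R a r) = 0 \<longrightarrow> x = 0"
    show "independent_on UNIV a" unfolding independent_on_def
    proof (rule allI, rule impI)
      fix k :: "'n \<Rightarrow> real" assume "(\<forall>r. r \<notin> UNIV \<longrightarrow> k r = 0) \<and> (\<Sum>r\<in>UNIV. k r *\<^sub>R a r) = 0"
      then have "(\<Sum>r\<in>UNIV. (\<chi> r. k r) $ r *\<^sub>R a r) = 0" by simp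
      then have "(\<chi> r. k r) = 0" using ker by blast
      then show "\<forall>r. k r = 0" by (simp add: vec_eq_iff)
    qed
  qed
  also have "\<dots> \<longleftrightarrow> det (transpose (\<chi> r. a r)) \<noteq> 0" by (rule det_nonzero_iff_ker_trivial[symmetric])
  finally show ?thesis by simp
qed

lemma independent_on_UNIV_if_inner_eq:
  fixes a b :: "'i::finite \<Rightarrow> 'v::real_inner"
  assumes "independent_on UNIV a" "\<And>r s. a r \<bullet> a s = b r \<bullet> b s"
  shows "independent_on UNIV b"
  using assms by (simp add: independent_on_iff_det_gram gram_on_def)

lemma inner_eq_if_norms_eq:
  fixes x y x' y' :: "'a::real_inner"
  assumes "norm x = norm x'" "norm y = norm y'" "norm (x - y) = norm (x' - y')"
  shows "x \<bullet> y = x' \<bullet> y'"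
proof -
  have "norm (x - y)^2 = norm (x' - y')^2" using assms by simp
  then have "x \<bullet> x - 2 * (x \<bullet> y) + y \<bullet> y = x' \<bullet> x' - 2 * (x' \<bullet> y') + y' \<bullet> y'"
    unfolding power2_norm_eq_inner by (simp add: inner_diff inner_commute)
  moreover have "x \<bullet> x = x' \<bullet> x'" "y \<bullet> y = y' \<bullet> y'" using assms(1,2) by (metis power2_norm_eq_inner)+
  ultimately show ?thesis by simp
qed

lemma eq_if_dists_eq_affine_basis:
  fixes z z' c :: "real^'d" and a :: "'d \<Rightarrow> real^'d"
  assumes ind: "independent_on UNIV a"
    and d0: "dist z c = dist z' c" and d: "\<And>r. dist z (c + a r) = dist z' (c + a r)"
  shows "z = z'"
proof -
  have "(z - c) \<bullet> a r = (z' - c) \<bullet> a r" for r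
    using d[of r] d0 by (intro inner_eq_if_norms_eq) (simp_all add: dist_norm algebra_simps)
  then have "(\<chi> r. a r) *v (z - z') = 0"
    by (simp add: vec_eq_iff matrix_vector_mul_component inner_diff inner_commute)
  then have "z - z' = 0" using ind unfolding independent_rows_iff_det det_nonzero_iff_ker_trivial by blast
  then show ?thesis by simp
qed

lemma exists_isometry_if_inner_eq:
  fixes a b :: "'d::finite \<Rightarrow> real^'d"
  assumes ind: "independent_on UNIV a" and inner: "\<And>r s. a r \<bullet> a s = b r \<bullet> b s"
  shows "\<exists>H :: real^'d^'d. (\<forall>x. norm (H *v x) = norm x) \<and> (\<forall>r. H *v b r = a r)"
proof -
  let ?M = "(\<chi> r. a r) :: real^'d^'d" and ?W = "(\<chi> r. b r) :: real^'d^'d"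
  have "det (transpose ?W) \<noteq> 0"
    using independent_on_UNIV_if_inner_eq[OF ind inner] by (simp add: independent_rows_iff_det)
  then obtain Y where Y: "transpose ?W ** Y = mat 1"
    unfolding invertible_det_nz[symmetric] invertible_def by blast
  define H where "H = transpose ?M ** Y"
  have col: "transpose (\<chi> r. c r) *v axis r 1 = c r" for c :: "'d \<Rightarrow> real^'d" and r
    by (simp only: matrix_vector_mult_basis column_transpose) (simp add: row_def vec_eq_iff)
  have "H ** transpose ?W = transpose ?M ** (Y ** transpose ?W)"
    unfolding H_def by (simp add: matrix_mul_assoc)
  also have "\<dots> = transpose ?M" using Y by (simp add: matrix_left_right_inverse[of "transpose ?W"])
  finally have HW: "H ** transpose ?W = transpose ?M" .
  have "H *v b r = a r" for r
  proof -
    have "H *v b r = H *v (transpose ?W *v axis r 1)" by (simp only: col)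
    also have "\<dots> = transpose ?M *v axis r 1" by (simp only: matrix_vector_mul_assoc HW)
    also have "\<dots> = a r" by (rule col)
    finally show ?thesis .
  qed
  moreover have "transpose H ** H = mat 1"
  proof -
    have gram: "?M ** transpose ?M = ?W ** transpose ?W"
      using inner by (simp add: vec_eq_iff matrix_matrix_mult_def transpose_def inner_vec_def)
    have "transpose H ** H = transpose Y ** (?M ** transpose ?M) ** Y"
      unfolding H_def by (simp add: matrix_transpose_mul matrix_mul_assoc)
    also have "\<dots> = transpose (transpose ?W ** Y) ** (transpose ?W ** Y)"
      unfolding gram by (simp add: matrix_transpose_mul matrix_mul_assoc)
    finally show ?thesis unfolding Y by simp
  qed
  then have "orthogonal_transformation ((*v) H)"
    by (simp add: orthogonal_transformation_matrix orthogonal_matrix matrix_vector_mul_linear)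
  ultimately show ?thesis using orthogonal_transformation_norm by blast
qed

section \<open>Rigidity of cycle powers\<close>

lemma locally_rigid_if_globally_rigid: "globally_rigid_fw V E p \<Longrightarrow> locally_rigid_fw V E p"
  unfolding globally_rigid_fw_def locally_rigid_fw_def by (intro exI[of _ 1]) auto

(* An isometry matches q with p on the window 0, ..., d; the remaining vertices follow by
   induction, each one being trilaterated from the d + 1 vertices preceding it. *)

lemma globally_rigid_if_windows_independent:
  fixes p :: "nat \<Rightarrow> real^'d" and \<iota> :: "'d \<Rightarrow> nat"
  assumes \<iota>: "bij_betw \<iota> UNIV {0..<CARD('d)}" and N: "CARD('d) < N"
    and E: "\<And>u v. u < N \<Longrightarrow> v < N \<Longrightarrow> u \<noteq> v \<Longrightarrow> u \<le> v + CARD('d) + 1 \<Longrightarrow> v \<le> u + CARD('d) + 1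
      \<Longrightarrow> (u, v) \<in> E"
    and windows: "\<And>u. u + CARD('d) < N \<Longrightarrow> independent_on UNIV (\<lambda>r. p (u + 1 + \<iota> r) - p u)"
  shows "globally_rigid_fw {0..<N} E p"
  unfolding globally_rigid_fw_def
proof (intro allI impI)
  let ?n = "CARD('d)"
  fix q assume "equivalent_fw {0..<N} E p q"
  then have edge: "norm (p u - p v) = norm (q u - q v)"
    if "u < N" "v < N" "u \<le> v + ?n + 1" "v \<le> u + ?n + 1" for u v
    using E[OF that(1,2) _ that(3,4)] that unfolding equivalent_fw_def by (cases "u = v") auto
  have \<iota>_less: "\<iota> r < ?n" for r using \<iota> unfolding bij_betw_def by auto
  define a where "a r = p (1 + \<iota> r) - p 0" for r
  define b where "b r = q (1 + \<iota> r) - q 0" for r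
  have "a r \<bullet> a s = b r \<bullet> b s" for r s
  proof (rule inner_eq_if_norms_eq)
    have "norm (a t) = norm (b t)" for t
      unfolding a_def b_def using \<iota>_less[of t] N by (intro edge) auto
    then show "norm (a r) = norm (b r)" "norm (a s) = norm (b s)" by auto
    show "norm (a r - a s) = norm (b r - b s)"
      unfolding a_def b_def using \<iota>_less[of r] \<iota>_less[of s] N by (simp add: edge)
  qed
  moreover have "independent_on UNIV a" using windows[of 0] N unfolding a_def by simp
  ultimately obtain H where H: "\<And>x. norm (H *v x) = norm x" "\<And>r. H *v b r = a r"
    using exists_isometry_if_inner_eq by blast
  define h where "h y = p 0 + H *v (y - q 0)" for y
  have h_dist: "dist (h y) (h y') = dist y y'" for y y'
    using H(1)[of "y - y'"] by (simp add: h_def dist_norm matrix_vector_mult_diff_distrib)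
  have h: "h (q v) = p v" if "v < N" for v
    using that
  proof (induction v rule: less_induct)
    case (less v)
    consider "v = 0" | r where "v = 1 + \<iota> r" | "?n < v"
    proof (cases "v = 0 \<or> ?n < v")
      case False
      then have "v - 1 \<in> \<iota> ` UNIV" using \<iota> unfolding bij_betw_def by auto
      then obtain r where "\<iota> r = v - 1" by auto
      with False have "v = 1 + \<iota> r" by simp
      then show ?thesis by (rule that(2))
    qed auto
    then show ?case
    proof cases
      case 1
      then show ?thesis by (simp add: h_def)
    next
      case (2 r)
      then show ?thesis using H(2)[of r] by (simp add: h_def a_def b_def)
    next
      case 3
      define u where "u = v - ?n - 1"
      have v: "v = u + ?n + 1" using 3 unfolding u_def by simp
      have near: "dist (p v) (p w) = dist (h (q v)) (p w)" if "u \<le> w" "w < v" for w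
      proof -
        have "dist (p v) (p w) = dist (q v) (q w)"
          using edge[of v w] that less.prems v by (simp add: dist_norm)
        also have "\<dots> = dist (h (q v)) (h (q w))" by (rule h_dist[symmetric])
        finally show ?thesis using less.IH[of w] that less.prems by simp
      qed
      have "p v = h (q v)"
      proof (rule eq_if_dists_eq_affine_basis[where a = "\<lambda>r. p (u + 1 + \<iota> r) - p u" and c = "p u"])
        show "independent_on UNIV (\<lambda>r. p (u + 1 + \<iota> r) - p u)" using windows less.prems v by simp
        show "dist (p v) (p u) = dist (h (q v)) (p u)" using near[of u] v by simp
        show "dist (p v) (p u + (p (u + 1 + \<iota> r) - p u)) = dist (h (q v)) (p u + (p (u + 1 + \<iota> r) - p u))"
          for r using near[of "u + 1 + \<iota> r"] \<iota>_less[of r] v by simp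
      qed
      then show ?thesis by simp
    qed
  qed
  show "congruent_fw {0..<N} p q"
    unfolding congruent_fw_def
  proof (intro ballI)
    fix u v assume "u \<in> {0..<N}" "v \<in> {0..<N}"
    then have "dist (p u) (p v) = dist (q u) (q v)" using h h_dist[of "q u" "q v"] by simp
    then show "norm (p u - p v) = norm (q u - q v)" by (simp add: dist_norm)
  qed
qed

lemma cycle_power_memI:
  assumes "u < N" "v < N" "u \<noteq> v" "u \<le> v + m" "v \<le> u + m"
  shows "(u, v) \<in> cycle_power N m"
proof -
  have "cycle_shift N u (int v - int u) = v" using assms(2) by (simp add: cycle_shift_def)
  then show ?thesis
    using assms unfolding cycle_power_def shift_graph_def by (auto intro!: exI[of _ "int v - int u"])
qed

lemma exists_small_norm_change:
  fixes w :: "'a::euclidean_space"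
  assumes "0 < \<epsilon>"
  shows "\<exists>t. norm t \<le> \<epsilon> \<and> norm (w + t) \<noteq> norm w"
proof (cases "w = 0")
  case True
  obtain e :: 'a where "e \<in> Basis" using nonempty_Basis by blast
  then show ?thesis using True assms by (intro exI[of _ "\<epsilon> *\<^sub>R e"]) auto
next
  case False
  have "w + (\<epsilon> / norm w) *\<^sub>R w = (1 + \<epsilon> / norm w) *\<^sub>R w" by (simp add: algebra_simps)
  then have "norm (w + (\<epsilon> / norm w) *\<^sub>R w) = norm w + \<epsilon>"
    using False assms by (simp add: field_simps)
  then show ?thesis using False assms by (intro exI[of _ "(\<epsilon> / norm w) *\<^sub>R w"]) simp
qed

lemma not_locally_rigid_if_disconnected:
  fixes p :: "'a \<Rightarrow> real^'d"
  assumes uw: "u \<in> V" "w \<in> V" "u \<in> U" "w \<notin> U"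
    and E: "\<And>x y. (x, y) \<in> E \<Longrightarrow> x \<in> U \<longleftrightarrow> y \<in> U"
  shows "\<not> locally_rigid_fw V E p"
proof
  assume "locally_rigid_fw V E p"
  then obtain \<epsilon> where \<epsilon>: "0 < \<epsilon>"
    and rigid: "\<And>q. (\<forall>v\<in>V. norm (p v - q v) \<le> \<epsilon>) \<and> equivalent_fw V E p q \<longrightarrow> congruent_fw V p q"
    unfolding locally_rigid_fw_def by blast
  obtain t where t: "norm t \<le> \<epsilon>" "norm (p u - p w + t) \<noteq> norm (p u - p w)"
    using exists_small_norm_change[OF \<epsilon>] by blast
  define q where "q v = (if v \<in> U then p v + t else p v)" for v
  have "\<forall>v\<in>V. norm (p v - q v) \<le> \<epsilon>" using t \<epsilon> by (simp add: q_def)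
  moreover have "equivalent_fw V E p q"
    unfolding equivalent_fw_def q_def by (auto dest: E)
  ultimately have "congruent_fw V p q" using rigid by blast
  then have "norm (p u - p w) = norm (q u - q w)" using uw unfolding congruent_fw_def by blast
  then show False using t uw by (simp add: q_def algebra_simps)
qed

lemma not_locally_rigid_twin_cycle_power:
  fixes p :: "nat \<Rightarrow> real^'d"
  assumes "0 < N"
  shows "\<not> locally_rigid_fw {0..<2 * N} (twin_cycle_power N m) p"
proof (rule not_locally_rigid_if_disconnected)
  show "0 \<in> {0..<2 * N}" "N \<in> {0..<2 * N}" "0 \<in> {0..<N}" "N \<notin> {0..<N}" using assms by auto
  fix x y assume "(x, y) \<in> twin_cycle_power N m"
  then have "y div N = x div N"
    unfolding twin_cycle_power_def shift_graph_def using twin_cycle_shift_div[OF assms] by auto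
  moreover have "x < N \<longleftrightarrow> x div N = 0" "y < N \<longleftrightarrow> y div N = 0" using assms by (auto simp: div_eq_0_iff)
  ultimately show "x \<in> {0..<N} \<longleftrightarrow> y \<in> {0..<N}" by simp
qed

section \<open>Generic configurations\<close>

lemma in_span_if_not_independent_on_insert:
  assumes ind: "independent_on S a" and dep: "\<not> independent_on (insert r0 S) a"
  shows "a r0 \<in> span (a ` S)"
proof -
  obtain k where supp: "\<forall>r. r \<notin> insert r0 S \<longrightarrow> k r = 0"
    and sum: "(\<Sum>r\<in>UNIV. k r *\<^sub>R a r) = 0" and nz: "\<exists>r. k r \<noteq> 0"
    using dep unfolding independent_on_def by blast
  have k0: "k r0 \<noteq> 0"
  proof
    assume "k r0 = 0"
    then have "\<forall>r. r \<notin> S \<longrightarrow> k r = 0" using supp by auto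
    then have "k r = 0" for r by (rule independent_onD[OF ind _ sum])
    then show False using nz by blast
  qed
  have "k r0 *\<^sub>R a r0 + (\<Sum>r\<in>UNIV - {r0}. k r *\<^sub>R a r) = 0"
    using sum by (simp add: sum.remove[of UNIV r0])
  then have eq: "k r0 *\<^sub>R a r0 = - (\<Sum>r\<in>UNIV - {r0}. k r *\<^sub>R a r)"
    by (simp add: eq_neg_iff_add_eq_0)
  have "a r0 = inverse (k r0) *\<^sub>R (k r0 *\<^sub>R a r0)" using k0 by simp
  also have "\<dots> = - inverse (k r0) *\<^sub>R (\<Sum>r\<in>UNIV - {r0}. k r *\<^sub>R a r)" unfolding eq by simp
  finally have "a r0 = - inverse (k r0) *\<^sub>R (\<Sum>r\<in>UNIV - {r0}. k r *\<^sub>R a r)" .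
  moreover have "(\<Sum>r\<in>UNIV - {r0}. k r *\<^sub>R a r) \<in> span (a ` S)"
  proof (rule span_sum)
    fix r assume r: "r \<in> UNIV - {r0}"
    show "k r *\<^sub>R a r \<in> span (a ` S)"
    proof (cases "r \<in> S")
      case True
      then show ?thesis by (intro span_scale span_base) simp
    next
      case False
      then show ?thesis using supp r by (simp add: span_zero)
    qed
  qed
  ultimately show ?thesis by (metis span_scale)
qed

lemma null_sets_translated_span_lowdim:
  fixes W :: "'a::euclidean_space set"
  assumes "finite W" "card W < DIM('a)"
  shows "(+) c ` span W \<in> null_sets lborel"
proof -
  have "dim (span W) < DIM('a)" using dim_le_card[of "span W" W] assms by simp
  then have "negligible ((+) c ` span W)" by (intro negligible_translation negligible_lowdim)
  then have "(+) c ` span W \<in> null_sets lebesgue" by (simp add: negligible_iff_null_sets)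
  moreover have "closed ((+) c ` span W)" by (intro closed_translation closed_subspace subspace_span)
  then have "(+) c ` span W \<in> sets lborel" by (simp add: borel_closed)
  ultimately show ?thesis using null_sets_completion_iff by blast
qed

lemma null_sets_PiM_insert_if_sections_null:
  assumes M: "product_sigma_finite M" and V: "finite V" "v \<notin> V"
    and Y: "Y \<in> sets (PiM (insert v V) M)"
    and sections: "\<And>x. \<exists>T\<in>null_sets (M v). \<forall>y. x(v := y) \<in> Y \<longrightarrow> y \<in> T"
  shows "Y \<in> null_sets (PiM (insert v V) M)"
proof -
  have "emeasure (PiM (insert v V) M) Y = (\<integral>\<^sup>+ p. indicator Y p \<partial>PiM (insert v V) M)"
    using Y by simp
  also have "\<dots> = (\<integral>\<^sup>+ x. \<integral>\<^sup>+ y. indicator Y (x(v := y)) \<partial>M v \<partial>PiM V M)"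
    using Y by (intro product_sigma_finite.product_nn_integral_insert[OF M V]) simp
  also have "\<dots> = (\<integral>\<^sup>+ x. 0 \<partial>PiM V M)"
  proof (intro nn_integral_cong antisym)
    fix x
    obtain T where T: "T \<in> null_sets (M v)" "\<forall>y. x(v := y) \<in> Y \<longrightarrow> y \<in> T"
      using sections by blast
    have "(\<integral>\<^sup>+ y. indicator Y (x(v := y)) \<partial>M v) \<le> (\<integral>\<^sup>+ y. indicator T y \<partial>M v)"
      using T(2) by (intro nn_integral_mono) (auto simp: indicator_def)
    also have "\<dots> = 0" using T(1) by (simp add: nn_integral_indicator null_sets_def)
    finally show "(\<integral>\<^sup>+ y. indicator Y (x(v := y)) \<partial>M v) \<le> 0" .
  qed simp
  finally have "emeasure (PiM (insert v V) M) Y = 0" by simp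
  then show ?thesis using Y by (rule null_setsI)
qed

lemma measurable_det_gram_on_differences:
  assumes "b \<in> V" "\<And>r. w r \<in> V"
  shows "(\<lambda>p. det (gram_on S (\<lambda>r. p (w r) - p b)))
           \<in> borel_measurable (PiM V (\<lambda>_. lborel :: 'v::euclidean_space measure))"
proof -
  have "(\<lambda>p. p i) \<in> borel_measurable (PiM V (\<lambda>_. lborel :: 'v measure))" if "i \<in> V" for i
    using measurable_component_singleton[OF that, of "\<lambda>_. lborel :: 'v measure"]
    by (simp add: measurable_lborel2)
  then have "(\<lambda>p. gram_on S (\<lambda>r. p (w r) - p b) $ r $ s) \<in> borel_measurable (PiM V (\<lambda>_. lborel))" for r s
    using assms unfolding gram_on_def by (simp add: borel_measurable_inner borel_measurable_diff)
  then show ?thesis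
    unfolding det_def
    by (intro borel_measurable_sum borel_measurable_times borel_measurable_const borel_measurable_prod)
qed

lemma sets_not_independent_on_differences:
  assumes "b \<in> V" "\<And>r. w r \<in> V"
  shows "{p \<in> space (PiM V (\<lambda>_. lborel)). \<not> independent_on S (\<lambda>r. p (w r) - p b)}
           \<in> sets (PiM V (\<lambda>_. lborel :: 'v::euclidean_space measure))"
proof -
  have "{p \<in> space (PiM V (\<lambda>_. lborel)). \<not> independent_on S (\<lambda>r. p (w r) - p b)}
      = (\<lambda>p. det (gram_on S (\<lambda>r. p (w r) - p b))) -` {0} \<inter> space (PiM V (\<lambda>_. lborel :: 'v measure))"
    by (auto simp: independent_on_iff_det_gram)
  then show ?thesis
    using measurable_sets[OF measurable_det_gram_on_differences[OF assms] borel_singleton[OF sets.empty_sets]]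
    by simp
qed

(* Once all points except p (w r0) are fixed, the configurations in question put p (w r0) into
   the affine span of p b and fewer than DIM('v) further points, a null set. *)

lemma null_sets_newly_dependent_differences:
  fixes w :: "'i::finite \<Rightarrow> 'a"
  assumes V: "finite V" "b \<in> V" "\<And>r. w r \<in> V" and w: "inj w" "\<And>r. w r \<noteq> b"
    and r0: "r0 \<notin> S" and dim: "CARD('i) \<le> DIM('v)"
  shows "{p \<in> space (PiM V (\<lambda>_. lborel)). independent_on S (\<lambda>r. p (w r) - p b)
            \<and> \<not> independent_on (insert r0 S) (\<lambda>r. p (w r) - p b)}
           \<in> null_sets (PiM V (\<lambda>_. lborel :: 'v::euclidean_space measure))"
    (is "?Y \<in> null_sets ?M")
proof -
  define v where "v = w r0"
  have V': "V = insert v (V - {v})" using V(3) unfolding v_def by auto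
  have "?Y = {p \<in> space ?M. \<not> independent_on (insert r0 S) (\<lambda>r. p (w r) - p b)}
      - {p \<in> space ?M. \<not> independent_on S (\<lambda>r. p (w r) - p b)}"
    by auto
  also have "\<dots> \<in> sets ?M"
    using V(2,3) by (intro sets.Diff sets_not_independent_on_differences)
  finally have Y: "?Y \<in> sets ?M" .
  have "card S < CARD('i)" using r0 by (intro psubset_card_mono) auto
  then have card: "card ((\<lambda>r. x (w r) - x b) ` S) < DIM('v)" for x :: "'a \<Rightarrow> 'v"
    using card_image_le[of S "\<lambda>r. x (w r) - x b"] dim by simp
  have "\<exists>T\<in>null_sets lborel. \<forall>y. x(v := y) \<in> ?Y \<longrightarrow> y \<in> T" for x
  proof
    show "(+) (x b) ` span ((\<lambda>r. x (w r) - x b) ` S) \<in> null_sets lborel"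
      using card by (intro null_sets_translated_span_lowdim) auto
    show "\<forall>y. x(v := y) \<in> ?Y \<longrightarrow> y \<in> (+) (x b) ` span ((\<lambda>r. x (w r) - x b) ` S)"
    proof (intro allI impI)
      fix y assume "x(v := y) \<in> ?Y"
      then have "independent_on S (\<lambda>r. (x(v := y)) (w r) - (x(v := y)) b)"
        and "\<not> independent_on (insert r0 S) (\<lambda>r. (x(v := y)) (w r) - (x(v := y)) b)"
        by auto
      moreover have "(\<lambda>r. (x(v := y)) (w r) - (x(v := y)) b) = (\<lambda>r. if r = r0 then y - x b else x (w r) - x b)"
        using w unfolding v_def by (auto simp: fun_eq_iff inj_eq)
      ultimately have "(\<lambda>r. if r = r0 then y - x b else x (w r) - x b) r0
          \<in> span ((\<lambda>r. if r = r0 then y - x b else x (w r) - x b) ` S)"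
        by (intro in_span_if_not_independent_on_insert) simp_all
      moreover have "(\<lambda>r. if r = r0 then y - x b else x (w r) - x b) ` S = (\<lambda>r. x (w r) - x b) ` S"
        using r0 by (auto intro: image_cong)
      ultimately have "y - x b \<in> span ((\<lambda>r. x (w r) - x b) ` S)" by simp
      then show "y \<in> (+) (x b) ` span ((\<lambda>r. x (w r) - x b) ` S)"
        by (intro image_eqI[of _ _ "y - x b"]) auto
    qed
  qed
  moreover have "product_sigma_finite (\<lambda>_. lborel :: 'v measure)" by standard
  moreover have "finite (V - {v})" "v \<notin> V - {v}" "?Y \<in> sets (PiM (insert v (V - {v})) (\<lambda>_. lborel))"
    using V(1) Y V' by auto
  ultimately have "?Y \<in> null_sets (PiM (insert v (V - {v})) (\<lambda>_. lborel))"
    by (intro null_sets_PiM_insert_if_sections_null) auto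
  then show ?thesis using V' by simp
qed

lemma AE_independent_differences:
  fixes w :: "'i::finite \<Rightarrow> 'a"
  assumes "finite V" "b \<in> V" "\<And>r. w r \<in> V" "inj w" "\<And>r. w r \<noteq> b" "CARD('i) \<le> DIM('v)"
  shows "AE p in PiM V (\<lambda>_. lborel :: 'v::euclidean_space measure). independent_on UNIV (\<lambda>r. p (w r) - p b)"
proof -
  let ?M = "PiM V (\<lambda>_. lborel :: 'v measure)"
  have "{p \<in> space ?M. \<not> independent_on S (\<lambda>r. p (w r) - p b)} \<in> null_sets ?M" for S :: "'i set"
    using finite[of S]
  proof (induction S rule: finite_induct)
    case empty
    have "independent_on {} a" for a :: "'i \<Rightarrow> 'v" unfolding independent_on_def by blast
    then show ?case by simp
  next
    case (insert r0 S)
    have "{p \<in> space ?M. \<not> independent_on S (\<lambda>r. p (w r) - p b)}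
          \<union> {p \<in> space ?M. independent_on S (\<lambda>r. p (w r) - p b)
              \<and> \<not> independent_on (insert r0 S) (\<lambda>r. p (w r) - p b)} \<in> null_sets ?M"
      using insert.IH null_sets_newly_dependent_differences[OF assms(1-5) insert.hyps(2) assms(6)]
      by (rule null_sets.Un)
    moreover have "{p \<in> space ?M. \<not> independent_on (insert r0 S) (\<lambda>r. p (w r) - p b)} \<in> sets ?M"
      using assms(2,3) by (rule sets_not_independent_on_differences)
    ultimately show ?case by (rule null_sets_subset) blast
  qed
  from this[of UNIV] show ?thesis by (rule AE_I') auto
qed

lemma AE_globally_rigid_cycle_power:
  assumes N: "CARD('d) < N"
  shows "AE p in config_measure {0..<N} TYPE('d::finite).
           globally_rigid_fw {0..<N} (cycle_power N (CARD('d) + 1)) (p :: nat \<Rightarrow> real^'d)"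
proof -
  obtain \<iota> :: "'d \<Rightarrow> nat" where \<iota>: "bij_betw \<iota> UNIV {0..<CARD('d)}"
    using ex_bij_betw_finite_nat[of "UNIV :: 'd set"] by auto
  then have \<iota>_less: "\<iota> r < CARD('d)" and "inj \<iota>" for r unfolding bij_betw_def by auto
  have "AE p in PiM {0..<N} (\<lambda>_. lborel :: (real^'d) measure).
          \<forall>u\<in>{u. u + CARD('d) < N}. independent_on UNIV (\<lambda>r. p (u + 1 + \<iota> r) - p u)"
  proof (rule AE_finite_allI)
    show "finite {u. u + CARD('d) < N}" by (rule finite_subset[of _ "{..<N}"]) auto
  next
    fix u assume u: "u \<in> {u. u + CARD('d) < N}"
    then have "u + 1 + \<iota> r \<in> {0..<N}" for r using \<iota>_less[of r] by simp
    then show "AE p in PiM {0..<N} (\<lambda>_. lborel :: (real^'d) measure).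
        independent_on UNIV (\<lambda>r. p (u + 1 + \<iota> r) - p u)"
      using u \<open>inj \<iota>\<close> by (intro AE_independent_differences) (auto simp: inj_def)
  qed
  then show ?thesis
    unfolding config_measure_def
    by (rule eventually_mono) (intro globally_rigid_if_windows_independent[OF \<iota> N] cycle_power_memI, auto)
qed

lemma AE_config_measure_imp_ex:
  fixes D :: "'d::finite itself" and P :: "('a \<Rightarrow> real^'d) \<Rightarrow> bool"
  assumes "finite V" "AE p in config_measure V D. P p"
  shows "\<exists>p. P p"
proof (rule ccontr)
  assume "\<nexists>p. P p"
  then have "AE p in config_measure V D. False" using assms(2) by simp
  then have "emeasure (config_measure V D) (space (config_measure V D)) = 0"
    unfolding ae_filter_eq_bot_iff[symmetric] trivial_limit_def[symmetric] .
  moreover have "product_sigma_finite (\<lambda>_. lborel :: (real^'d) measure)" by standard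
  then have "emeasure (config_measure V D) (PiE V (\<lambda>_. UNIV)) = (\<Prod>i\<in>V. emeasure lborel (UNIV :: (real^'d) set))"
    unfolding config_measure_def by (rule product_sigma_finite.emeasure_PiM) (use assms(1) in auto)
  ultimately show False using assms(1) by (simp add: config_measure_def space_PiM)
qed

lemma GLO_cycle_power:
  assumes "CARD('d::finite) < N"
  shows "GLO TYPE('d) {0..<N} (cycle_power N (CARD('d) + 1))"
proof -
  have "is_graph (cycle_power N (CARD('d) + 1))"
    unfolding cycle_power_def by (rule is_graph_shift_graph[OF cyclic_action_cycle_shift]) (use assms in simp)
  then show ?thesis
    using AE_globally_rigid_cycle_power[OF assms] unfolding GLO_def globally_d_rigid_def by simp
qed

lemma LOC_cycle_power:
  assumes "CARD('d::finite) < N"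
  shows "LOC TYPE('d) {0..<N} (cycle_power N (CARD('d) + 1))"
  using GLO_cycle_power[OF assms] locally_rigid_if_globally_rigid
  unfolding GLO_def LOC_def globally_d_rigid_def locally_d_rigid_def by (auto elim: eventually_mono)

lemma not_LOC_twin_cycle_power:
  assumes "0 < N"
  shows "\<not> LOC TYPE('d::finite) {0..<2 * N} (twin_cycle_power N m)"
  using AE_config_measure_imp_ex[where V = "{0..<2 * N}" and D = "TYPE('d)"]
    not_locally_rigid_twin_cycle_power[OF assms]
  unfolding LOC_def locally_d_rigid_def by blast

lemma not_GLO_twin_cycle_power:
  assumes "0 < N"
  shows "\<not> GLO TYPE('d::finite) {0..<2 * N} (twin_cycle_power N m)"
  using AE_config_measure_imp_ex[where V = "{0..<2 * N}" and D = "TYPE('d)"]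
    not_locally_rigid_twin_cycle_power[OF assms] locally_rigid_if_globally_rigid
  unfolding GLO_def globally_d_rigid_def by blast

theorem theorem4p9:
  shows "\<not> fo_definable (LOC TYPE('d::finite)) \<and> \<not> fo_definable (GLO TYPE('d::finite))"
proof
  show "\<not> fo_definable (LOC TYPE('d))"
    using LOC_cycle_power not_LOC_twin_cycle_power by (rule not_fo_definable_if_separates_cycle_powers)
  show "\<not> fo_definable (GLO TYPE('d))"
    using GLO_cycle_power not_GLO_twin_cycle_power by (rule not_fo_definable_if_separates_cycle_powers)
qed

end
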